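(* Let $K\ge1$, $\beta\in(0,1)$, $V^{\mathrm c}>0$, and for each $k$ let $\alpha_k>0$ with $\sum_k\alpha_k=1$, $L_k>0$, $V_k^{\mathrm d}>0$, $R_k>0$. For $t_k>0$, $V_k^{\mathrm c}>0$ define \[ \widehat D_{k,1}=\frac{L_k}{t_kR_k}\cdot\frac{(t_kR_k+V_k^{\mathrm c})(t_kR_k+\beta V_k^{\mathrm d})}{V_k^{\mathrm d}V_k^{\mathrm c}(1+\beta)+t_kR_k(V_k^{\mathrm d}+V_k^{\mathrm c})},\qquad \widehat D_{k,2}=\frac{L_k}{t_kR_k}\cdot\frac{t_kR_k+\beta V_k^{\mathrm d}}{V_k^{\mathrm d}+t_kR_k}, \] and $\widehat D_k=\widehat D_{k,1}$ if $t_kR_k\ge\sqrt{\beta V_k^{\mathrm d}V_k^{\mathrm c}}$, $\widehat D_k=\widehat D_{k,2}$ if $t_kR_k<\sqrt{\beta V_k^{\mathrm d}V_k^{\mathrm c}}$. Consider the problem (Problem 4) \[ \min_{\{t_k,V_k^{\mathrm c}\}}\sum_{k=1}^K\alpha_k\widehat D_k\quad\text{s.t.}\quad \sum_{k=1}^K t_k\le1,\ t_k\ge0,\quad \sum_{k=1}^K V_k^{\mathrm c}\le V^{\mathrm c},\ V_k^{\mathrm c}\ge0. \] Then Problem 4 is a piecewise convex optimization problem: each $\widehat D_k$ is a continuous, piecewise-defined function of $(t_k,V_k^{\mathrm c})$ whose pieces $\widehat D_{k,1}$, $\widehat D_{k,2}$ are convex, and the objective $\sum_k\alpha_k\widehat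 D_k$ is convex in $(t_1,\dots,t_K,V_1^{\mathrm c},\dots,V_K^{\mathrm c})$ on the domain $t_k>0$, $V_k^{\mathrm c}>0$.
   Context: $\widehat D_k$ is the minimal end-to-end delay of device $k$ in the partial compression offloading model (local compression speed $V_k^{\mathrm d}$, edge compression speed $V_k^{\mathrm c}$, TDMA time fraction $t_k$, average channel rate $R_k$, $L_k$ raw bits, compression ratio $\beta$) after optimizing the fraction of data compressed locally. The paper asserts "Problem 4 is a piecewise convex optimization problem"; the claim spells this out as convexity of the pieces and of the overall objective. *)

theory Defs
  imports "HOL-Analysis.Analysis"
begin

definition Dhat1 :: "real \<Rightarrow> real \<Rightarrow> real \<Rightarrow> real \<Rightarrow> real \<Rightarrow> real \<Rightarrow> real" where
  "Dhat1 beta L R Vd t vc =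
     L / (t * R) * ((t * R + vc) * (t * R + beta * Vd)
       / (Vd * vc * (1 + beta) + t * R * (Vd + vc)))"

definition Dhat2 :: "real \<Rightarrow> real \<Rightarrow> real \<Rightarrow> real \<Rightarrow> real \<Rightarrow> real \<Rightarrow> real" where
  "Dhat2 beta L R Vd t vc = L / (t * R) * ((t * R + beta * Vd) / (Vd + t * R))"

definition Dhat :: "real \<Rightarrow> real \<Rightarrow> real \<Rightarrow> real \<Rightarrow> real \<Rightarrow> real \<Rightarrow> real" where
  "Dhat beta L R Vd t vc =
     (if t * R \<ge> sqrt (beta * Vd * vc) then Dhat1 beta L R Vd t vc
      else Dhat2 beta L R Vd t vc)"

end

theory Submission
  imports Defs
begin

text \<open>Write \<open>x = t R\<close>. Then \<open>Dhat1 = L / (V\<^sup>d x / (x + \<beta> V\<^sup>d) + x v / (x + v))\<close>, and both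
  summands of the denominator are jointly concave: the first is \<open>V\<^sup>d\<close> minus a multiple of the
  convex function \<open>1 / (x + \<beta> V\<^sup>d)\<close>, the second is \<open>x - x\<^sup>2 / (x + v)\<close> with \<open>(a, w) \<mapsto> a\<^sup>2 / w\<close>
  convex. The reciprocal of a positive concave function is convex, so \<open>Dhat1\<close> is convex, and
  \<open>Dhat2 = L (\<beta> / x + (1 - \<beta>) / (x + V\<^sup>d))\<close> is convex as well. Finally \<open>Dhat\<close> is the
  pointwise maximum of the two pieces, hence convex, and the objective is a nonnegative
  combination of such functions of separate coordinates.\<close>

lemma convex_on_cong:
  assumes "convex_on S f" "\<And>x. x \<in> S \<Longrightarrow> f x = g x"
  shows "convex_on S g"
  using assms convex_on_imp_convex[OF assms(1)] by (auto simp: convex_on_def convexD)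

lemma concave_on_cong:
  assumes "concave_on S f" "\<And>x. x \<in> S \<Longrightarrow> f x = g x"
  shows "concave_on S g"
  using convex_on_cong[OF assms(1)[unfolded concave_on_def], of "\<lambda>x. - g x"] assms(2)
  unfolding concave_on_def by simp

lemma convex_on_max:
  assumes "convex_on S f" "convex_on S g"
  shows "convex_on S (\<lambda>x. max (f x) (g x))"
proof (rule convex_onI[OF _ convex_on_imp_convex[OF assms(1)]])
  fix t :: real and x y assume "0 < t" "t < 1" "x \<in> S" "y \<in> S"
  then have "f ((1 - t) *\<^sub>R x + t *\<^sub>R y) \<le> (1 - t) * f x + t * f y"
    "g ((1 - t) *\<^sub>R x + t *\<^sub>R y) \<le> (1 - t) * g x + t * g y"
    using assms by (auto intro: convex_onD)
  moreover have "(1 - t) * f x + t * f y \<le> (1 - t) * max (f x) (g x) + t * max (f y) (g y)"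
    "(1 - t) * g x + t * g y \<le> (1 - t) * max (f x) (g x) + t * max (f y) (g y)"
    using \<open>0 < t\<close> \<open>t < 1\<close> by (intro add_mono mult_left_mono; simp)+
  ultimately show "max (f ((1 - t) *\<^sub>R x + t *\<^sub>R y)) (g ((1 - t) *\<^sub>R x + t *\<^sub>R y))
      \<le> (1 - t) * max (f x) (g x) + t * max (f y) (g y)" by simp
qed

lemma convex_on_linear_comp:
  assumes "convex_on S f" "linear h" "convex T" "h ` T \<subseteq> S"
  shows "convex_on T (\<lambda>x. f (h x))"
proof (rule convex_onI[OF _ assms(3)])
  fix t :: real and x y assume "0 < t" "t < 1" "x \<in> T" "y \<in> T"
  moreover have "h ((1 - t) *\<^sub>R x + t *\<^sub>R y) = (1 - t) *\<^sub>R h x + t *\<^sub>R h y"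
    using assms(2) by (simp add: linear_add linear_scale)
  ultimately show "f (h ((1 - t) *\<^sub>R x + t *\<^sub>R y)) \<le> (1 - t) * f (h x) + t * f (h y)"
    using convex_onD[OF assms(1), of t "h x" "h y"] assms(4) by auto
qed

lemma convex_on_sum_fun:
  assumes "finite I" "convex S" "\<And>i. i \<in> I \<Longrightarrow> convex_on S (f i)"
  shows "convex_on S (\<lambda>x. \<Sum>i\<in>I. f i x)"
  using assms by (induction I rule: finite_induct) (auto simp: convex_on_const)

lemma convex_on_inverse_concave:
  assumes "concave_on S g" "\<And>x. x \<in> S \<Longrightarrow> 0 < g x"
  shows "convex_on S (\<lambda>x. inverse (g x))"
proof (rule convex_onI[OF _ concave_on_imp_convex[OF assms(1)]])
  fix t :: real and x y assume t: "0 < t" "t < 1" and xy: "x \<in> S" "y \<in> S"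
  have mix_pos: "0 < (1 - t) * g x + t * g y"
    using t xy assms(2) by (smt (verit) mult_pos_pos)
  have "inverse (g ((1 - t) *\<^sub>R x + t *\<^sub>R y)) \<le> inverse ((1 - t) * g x + t * g y)"
    using concave_onD[OF assms(1), of t x y] t xy mix_pos by (intro le_imp_inverse_le) auto
  also have "\<dots> \<le> (1 - t) * inverse (g x) + t * inverse (g y)"
    using convex_onD[OF convex_on_inverse[of "{0<..}"], of t "g x" "g y"] t xy assms(2) by simp
  finally show "inverse (g ((1 - t) *\<^sub>R x + t *\<^sub>R y)) \<le> (1 - t) * inverse (g x) + t * inverse (g y)" .
qed

lemma convex_on_square_over:
  "convex_on {p :: real \<times> real. 0 < snd p} (\<lambda>p. (fst p)\<^sup>2 / snd p)"
proof (rule convex_onI)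
  fix t :: real and x y :: "real \<times> real"
  assume t: "0 < t" "t < 1" and xy: "x \<in> {p. 0 < snd p}" "y \<in> {p. 0 < snd p}"
  obtain a1 w1 a2 w2 where x: "x = (a1, w1)" and y: "y = (a2, w2)" by fastforce
  have w: "0 < w1" "0 < w2" using xy x y by auto
  have W: "0 < (1 - t) * w1 + t * w2" using t w by (smt (verit) mult_pos_pos)
  have "((1 - t) * (a1\<^sup>2 / w1) + t * (a2\<^sup>2 / w2)) * ((1 - t) * w1 + t * w2) - ((1 - t) * a1 + t * a2)\<^sup>2
      = (1 - t) * t * (a1 * w2 - a2 * w1)\<^sup>2 / (w1 * w2)"
    using w by (simp add: field_simps power2_eq_square)
  also have "\<dots> \<ge> 0" using t w by simp
  finally have "((1 - t) * a1 + t * a2)\<^sup>2 \<le> ((1 - t) * (a1\<^sup>2 / w1) + t * (a2\<^sup>2 / w2)) * ((1 - t) * w1 + t * w2)"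
    by simp
  then show "(fst ((1 - t) *\<^sub>R x + t *\<^sub>R y))\<^sup>2 / snd ((1 - t) *\<^sub>R x + t *\<^sub>R y)
      \<le> (1 - t) * ((fst x)\<^sup>2 / snd x) + t * ((fst y)\<^sup>2 / snd y)"
    using W by (simp add: x y divide_le_eq)
next
  show "convex {p :: real \<times> real. 0 < snd p}"
    by (simp add: convex_def) (smt (verit) mult_pos_pos mult_nonneg_nonneg)
qed

lemma convex_positive_quadrant: "convex {p :: real \<times> real. 0 < fst p \<and> 0 < snd p}"
proof -
  have "{p :: real \<times> real. 0 < fst p \<and> 0 < snd p} = {0<..} \<times> {0<..}" by auto
  then show ?thesis by (simp add: convex_Times)
qed

lemma concave_on_scaled_fst_plus_const:
  assumes "convex S"
  shows "concave_on S (\<lambda>p :: real \<times> 'a::real_vector. fst p * R + c)"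
proof -
  have "fst (u *\<^sub>R x + v *\<^sub>R y) * R + c = u * (fst x * R + c) + v * (fst y * R + c)"
    if "u + v = 1" for u v :: real and x y :: "real \<times> 'a"
  proof -
    have "c = (u + v) * c" using that by simp
    then show ?thesis by (simp add: algebra_simps)
  qed
  then show ?thesis using assms by (simp add: concave_on_iff)
qed

lemma convex_on_inverse_scaled_fst_plus_const:
  assumes "0 < R" "0 \<le> c"
  shows "convex_on {p :: real \<times> real. 0 < fst p \<and> 0 < snd p} (\<lambda>p. inverse (fst p * R + c))"
  using assms
  by (intro convex_on_inverse_concave concave_on_scaled_fst_plus_const convex_positive_quadrant)
     (auto intro: add_pos_nonneg)

definition effective_rate :: "real \<Rightarrow> real \<Rightarrow> real \<Rightarrow> real \<Rightarrow> real \<Rightarrow> real" where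
  "effective_rate beta R Vd t vc = Vd * (t * R) / (t * R + beta * Vd) + t * R * vc / (t * R + vc)"

lemma effective_rate_pos:
  "0 < beta \<Longrightarrow> 0 < R \<Longrightarrow> 0 < Vd \<Longrightarrow> 0 < t \<Longrightarrow> 0 < vc \<Longrightarrow> 0 < effective_rate beta R Vd t vc"
  unfolding effective_rate_def by (intro add_pos_pos divide_pos_pos mult_pos_pos) auto

lemma effective_rate_mono:
  assumes "0 < R" "0 < t" "0 < vc" "vc \<le> vc'"
  shows "effective_rate beta R Vd t vc \<le> effective_rate beta R Vd t vc'"
proof -
  have x: "0 < t * R" using assms by simp
  have "t * R * v / (t * R + v) = t * R - (t * R)\<^sup>2 / (t * R + v)" if "0 < v" for v
    using x that by (simp add: field_simps power2_eq_square)
  moreover have "(t * R)\<^sup>2 / (t * R + vc') \<le> (t * R)\<^sup>2 / (t * R + vc)"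
    using x assms by (intro divide_left_mono mult_pos_pos add_pos_pos) auto
  ultimately show ?thesis unfolding effective_rate_def using assms by simp
qed

lemma Dhat1_eq_div_effective_rate:
  assumes "0 < beta" "0 < R" "0 < Vd" "0 < t" "0 < vc"
  shows "Dhat1 beta L R Vd t vc = L / effective_rate beta R Vd t vc"
proof -
  define x where "x = t * R"
  have pos: "0 < x" "0 < x + beta * Vd" "0 < x + vc"
    using assms by (auto simp: x_def intro: add_pos_pos)
  have "effective_rate beta R Vd t vc
      = x * (Vd * vc * (1 + beta) + x * (Vd + vc)) / ((x + vc) * (x + beta * Vd))"
    using pos unfolding effective_rate_def x_def[symmetric] by (simp add: field_simps)
  then show ?thesis
    unfolding Dhat1_def x_def[symmetric] by simp
qed

lemma Dhat2_eq_Dhat1_saturated: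
  assumes "0 < beta" "0 < R" "0 < Vd" "0 < t"
  shows "Dhat2 beta L R Vd t vc = Dhat1 beta L R Vd t ((t * R)\<^sup>2 / (beta * Vd))"
proof -
  define x where "x = t * R"
  have pos: "0 < x" "0 < x + beta * Vd" "0 < Vd + x" "0 < x\<^sup>2 / (beta * Vd)"
    using assms by (auto simp: x_def intro: add_pos_pos)
  have "x * (x\<^sup>2 / (beta * Vd)) / (x + x\<^sup>2 / (beta * Vd)) = x\<^sup>2 / (x + beta * Vd)"
    using pos assms mult_pos_pos[OF pos(1,2)]
    by (simp add: field_simps power2_eq_square)
  then have "effective_rate beta R Vd t (x\<^sup>2 / (beta * Vd)) = x * (Vd + x) / (x + beta * Vd)"
    unfolding effective_rate_def x_def[symmetric]
    by (simp add: power2_eq_square algebra_simps add_divide_distrib)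
  then show ?thesis
    using pos assms
    by (simp add: Dhat1_eq_div_effective_rate x_def[symmetric]) (simp add: Dhat2_def x_def)
qed


lemma Dhat1_antimono:
  assumes "0 < beta" "0 \<le> L" "0 < R" "0 < Vd" "0 < t" "0 < vc" "vc \<le> vc'"
  shows "Dhat1 beta L R Vd t vc' \<le> Dhat1 beta L R Vd t vc"
proof -
  have "0 < effective_rate beta R Vd t vc" "0 < effective_rate beta R Vd t vc'"
    using assms by (auto intro: effective_rate_pos)
  moreover have "effective_rate beta R Vd t vc \<le> effective_rate beta R Vd t vc'"
    using assms by (intro effective_rate_mono)
  ultimately show ?thesis
    using assms by (simp add: Dhat1_eq_div_effective_rate divide_left_mono)
qed

text \<open>Edge compression faster than the saturation speed \<open>(t R)\<^sup>2 / (\<beta> V\<^sup>d)\<close> no longer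
  lowers \<open>Dhat1\<close>, and \<open>Dhat2\<close> is \<open>Dhat1\<close> at that speed; the threshold in \<open>Dhat\<close> is exactly
  the comparison of \<open>vc\<close> with it, so \<open>Dhat\<close> picks the larger piece.\<close>
lemma Dhat_eq_max:
  assumes "0 < beta" "0 \<le> L" "0 < R" "0 < Vd" "0 < t" "0 < vc"
  shows "Dhat beta L R Vd t vc = max (Dhat1 beta L R Vd t vc) (Dhat2 beta L R Vd t vc)"
proof -
  define vsat where "vsat = (t * R)\<^sup>2 / (beta * Vd)"
  have "sqrt (beta * Vd * vc) \<le> t * R \<longleftrightarrow> beta * Vd * vc \<le> (t * R)\<^sup>2"
    using assms by (simp add: real_sqrt_le_iff')
  also have "\<dots> \<longleftrightarrow> vc \<le> vsat"
    using assms by (simp add: vsat_def le_divide_eq mult.commute)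
  finally have threshold: "sqrt (beta * Vd * vc) \<le> t * R \<longleftrightarrow> vc \<le> vsat" .
  have sat: "Dhat2 beta L R Vd t vc = Dhat1 beta L R Vd t vsat"
    unfolding vsat_def using assms by (simp add: Dhat2_eq_Dhat1_saturated)
  show ?thesis
  proof (cases "vc \<le> vsat")
    case True
    then have "Dhat2 beta L R Vd t vc \<le> Dhat1 beta L R Vd t vc"
      unfolding sat using assms by (intro Dhat1_antimono)
    then show ?thesis using True threshold by (simp add: Dhat_def)
  next
    case False
    have "0 < vsat" using assms by (simp add: vsat_def)
    then have "Dhat1 beta L R Vd t vc \<le> Dhat2 beta L R Vd t vc"
      unfolding sat using assms False by (intro Dhat1_antimono) auto
    then show ?thesis using False threshold by (simp add: Dhat_def)
  qed
qed


lemma concave_on_effective_rate: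
  assumes "0 < beta" "0 < R" "0 < Vd"
  shows "concave_on {p. 0 < fst p \<and> 0 < snd p} (\<lambda>p. effective_rate beta R Vd (fst p) (snd p))"
proof -
  let ?Q = "{p :: real \<times> real. 0 < fst p \<and> 0 < snd p}"
  have local_part: "concave_on ?Q (\<lambda>p. Vd - beta * Vd\<^sup>2 * inverse (fst p * R + beta * Vd))"
    using assms
    by (intro concave_on_diff convex_on_cmul convex_on_inverse_scaled_fst_plus_const)
       (auto simp: concave_on_const convex_positive_quadrant)
  have lin: "linear (\<lambda>p :: real \<times> real. (fst p * R, fst p * R + snd p))"
    by (rule linearI) (auto simp: algebra_simps)
  have img: "(\<lambda>p. (fst p * R, fst p * R + snd p)) ` ?Q \<subseteq> {p. 0 < snd p}"
    using assms by (auto intro!: add_pos_pos)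
  have "convex_on ?Q (\<lambda>p. (fst p * R)\<^sup>2 / (fst p * R + snd p))"
    using convex_on_linear_comp[OF convex_on_square_over lin convex_positive_quadrant img] by simp
  then have edge_part: "concave_on ?Q (\<lambda>p. fst p * R - (fst p * R)\<^sup>2 / (fst p * R + snd p))"
    using concave_on_scaled_fst_plus_const[OF convex_positive_quadrant, of R 0]
    by (intro concave_on_diff) auto
  show ?thesis
  proof (rule concave_on_cong[OF concave_on_add[OF local_part edge_part]])
    fix p :: "real \<times> real" assume "p \<in> ?Q"
    then have "0 < fst p * R + beta * Vd" "0 < fst p * R + snd p"
      using assms by (auto intro: add_pos_pos)
    then show "Vd - beta * Vd\<^sup>2 * inverse (fst p * R + beta * Vd)
        + (fst p * R - (fst p * R)\<^sup>2 / (fst p * R + snd p))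
        = effective_rate beta R Vd (fst p) (snd p)"
      unfolding effective_rate_def by (simp add: field_simps power2_eq_square)
  qed
qed

lemma convex_on_Dhat1:
  assumes "0 < beta" "0 \<le> L" "0 < R" "0 < Vd"
  shows "convex_on {p. 0 < fst p \<and> 0 < snd p} (\<lambda>(t, vc). Dhat1 beta L R Vd t vc)"
proof (rule convex_on_cong)
  show "convex_on {p. 0 < fst p \<and> 0 < snd p}
      (\<lambda>p. L * inverse (effective_rate beta R Vd (fst p) (snd p)))"
    using assms
    by (intro convex_on_cmul convex_on_inverse_concave concave_on_effective_rate effective_rate_pos)
       auto
qed (use assms in \<open>auto simp: Dhat1_eq_div_effective_rate divide_inverse\<close>)

lemma convex_on_Dhat2:
  assumes "0 < beta" "beta < 1" "0 \<le> L" "0 < R" "0 < Vd"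
  shows "convex_on {p. 0 < fst p \<and> 0 < snd p} (\<lambda>(t, vc). Dhat2 beta L R Vd t vc)"
proof (rule convex_on_cong)
  let ?Q = "{p :: real \<times> real. 0 < fst p \<and> 0 < snd p}"
  have "convex_on ?Q (\<lambda>p. inverse (fst p * R))"
    using convex_on_inverse_scaled_fst_plus_const[of R 0] assms by simp
  moreover have "convex_on ?Q (\<lambda>p. inverse (fst p * R + Vd))"
    using assms by (intro convex_on_inverse_scaled_fst_plus_const) auto
  ultimately show "convex_on ?Q
      (\<lambda>p. L * (beta * inverse (fst p * R) + (1 - beta) * inverse (fst p * R + Vd)))"
    using assms by (intro convex_on_cmul convex_on_add) auto
next
  fix p :: "real \<times> real" assume "p \<in> {p. 0 < fst p \<and> 0 < snd p}"
  then obtain t vc where p: "p = (t, vc)" and "0 < t" by (cases p) auto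
  define x where "x = t * R"
  have "0 < x" "0 < x + Vd" "0 < Vd + x"
    using \<open>0 < t\<close> assms by (auto simp: x_def intro: add_pos_pos)
  then have "beta * inverse x + (1 - beta) * inverse (x + Vd) = (x + beta * Vd) / (x * (Vd + x))"
    by (simp add: field_simps)
  then have "L * (beta * inverse x + (1 - beta) * inverse (x + Vd)) = Dhat2 beta L R Vd t vc"
    unfolding Dhat2_def x_def[symmetric] by simp
  then show "L * (beta * inverse (fst p * R) + (1 - beta) * inverse (fst p * R + Vd))
      = (case p of (t, vc) \<Rightarrow> Dhat2 beta L R Vd t vc)"
    by (simp add: p x_def)
qed

lemma convex_on_Dhat:
  assumes "0 < beta" "beta < 1" "0 \<le> L" "0 < R" "0 < Vd"
  shows "convex_on {p. 0 < fst p \<and> 0 < snd p} (\<lambda>(t, vc). Dhat beta L R Vd t vc)"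
proof (rule convex_on_cong)
  show "convex_on {p. 0 < fst p \<and> 0 < snd p} (\<lambda>p. max ((\<lambda>(t, vc). Dhat1 beta L R Vd t vc) p)
      ((\<lambda>(t, vc). Dhat2 beta L R Vd t vc) p))"
    using assms by (intro convex_on_max convex_on_Dhat1 convex_on_Dhat2)
qed (use assms in \<open>auto simp: Dhat_eq_max\<close>)

lemma continuous_on_Dhat:
  assumes "0 < beta" "0 \<le> L" "0 < R" "0 < Vd"
  shows "continuous_on {p. 0 < fst p \<and> 0 < snd p} (\<lambda>(t, vc). Dhat beta L R Vd t vc)"
proof (rule continuous_on_cong[THEN iffD1])
  let ?Q = "{p :: real \<times> real. 0 < fst p \<and> 0 < snd p}"
  have denominators_nonzero: "\<forall>p\<in>?Q. fst p * R \<noteq> 0 \<and> Vd + fst p * R \<noteq> 0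
      \<and> Vd * snd p * (1 + beta) + fst p * R * (Vd + snd p) \<noteq> 0"
  proof
    fix p :: "real \<times> real" assume "p \<in> ?Q"
    then have "0 < fst p * R" "0 < Vd + fst p * R"
        "0 < Vd * snd p * (1 + beta) + fst p * R * (Vd + snd p)"
      using assms by (auto intro!: add_pos_pos mult_pos_pos)
    then show "fst p * R \<noteq> 0 \<and> Vd + fst p * R \<noteq> 0
        \<and> Vd * snd p * (1 + beta) + fst p * R * (Vd + snd p) \<noteq> 0" by linarith
  qed
  show "continuous_on ?Q (\<lambda>p. max (Dhat1 beta L R Vd (fst p) (snd p)) (Dhat2 beta L R Vd (fst p) (snd p)))"
    unfolding Dhat1_def Dhat2_def by (intro continuous_intros) (use denominators_nonzero in auto)
qed (use assms in \<open>auto simp: Dhat_eq_max\<close>)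

lemma convex_positive_orthant_pair:
  "convex {p :: (real ^ 'n) \<times> (real ^ 'n). \<forall>i. 0 < fst p $ i \<and> 0 < snd p $ i}"
proof -
  have "convex {x :: real ^ 'n. \<forall>i. 0 < x $ i}"
    by (rule convex_box_cart) (simp add: greaterThan_def[symmetric])
  moreover have "{p :: (real ^ 'n) \<times> (real ^ 'n). \<forall>i. 0 < fst p $ i \<and> 0 < snd p $ i}
      = {x. \<forall>i. 0 < x $ i} \<times> {x. \<forall>i. 0 < x $ i}" by auto
  ultimately show ?thesis by (simp add: convex_Times)
qed

theorem theorem3:
  fixes beta Vc_tot :: real
    and alpha L Vd R :: "'k::finite \<Rightarrow> real"
  assumes "0 < beta" "beta < 1" "0 < Vc_tot"
    and "\<And>k. 0 < alpha k" "(\<Sum>k\<in>UNIV. alpha k) = 1"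
    and "\<And>k. 0 < L k" "\<And>k. 0 < Vd k" "\<And>k. 0 < R k"
  shows "(\<forall>k. continuous_on {p :: real \<times> real. 0 < fst p \<and> 0 < snd p}
                 (\<lambda>(t, vc). Dhat beta (L k) (R k) (Vd k) t vc)
            \<and> convex_on {p :: real \<times> real. 0 < fst p \<and> 0 < snd p}
                 (\<lambda>(t, vc). Dhat1 beta (L k) (R k) (Vd k) t vc)
            \<and> convex_on {p :: real \<times> real. 0 < fst p \<and> 0 < snd p}
                 (\<lambda>(t, vc). Dhat2 beta (L k) (R k) (Vd k) t vc))
       \<and> convex_on {p :: (real ^ 'k) \<times> (real ^ 'k). \<forall>k. 0 < fst p $ k \<and> 0 < snd p $ k}
           (\<lambda>(t, vc). \<Sum>k\<in>UNIV. alpha k * Dhat beta (L k) (R k) (Vd k) (t $ k) (vc $ k))"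
proof (intro conjI allI)
  fix k
  have params: "0 < beta" "beta < 1" "0 \<le> L k" "0 < R k" "0 < Vd k"
    using assms by (auto intro: less_imp_le)
  show "continuous_on {p. 0 < fst p \<and> 0 < snd p} (\<lambda>(t, vc). Dhat beta (L k) (R k) (Vd k) t vc)"
    using params by (intro continuous_on_Dhat)
  show "convex_on {p. 0 < fst p \<and> 0 < snd p} (\<lambda>(t, vc). Dhat1 beta (L k) (R k) (Vd k) t vc)"
    using params by (intro convex_on_Dhat1)
  show "convex_on {p. 0 < fst p \<and> 0 < snd p} (\<lambda>(t, vc). Dhat2 beta (L k) (R k) (Vd k) t vc)"
    using params by (intro convex_on_Dhat2)
next
  let ?T = "{p :: (real ^ 'k) \<times> (real ^ 'k). \<forall>k. 0 < fst p $ k \<and> 0 < snd p $ k}"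
  have "convex_on ?T (\<lambda>p. alpha k * (\<lambda>(t, vc). Dhat beta (L k) (R k) (Vd k) t vc) (fst p $ k, snd p $ k))"
    for k
  proof (intro convex_on_cmul convex_on_linear_comp[OF convex_on_Dhat])
    show "linear (\<lambda>p :: (real ^ 'k) \<times> (real ^ 'k). (fst p $ k, snd p $ k))"
      by (rule linearI) auto
  qed (use assms in \<open>auto intro: less_imp_le convex_positive_orthant_pair\<close>)
  then have "convex_on ?T (\<lambda>p. \<Sum>k\<in>UNIV. alpha k * (\<lambda>(t, vc). Dhat beta (L k) (R k) (Vd k) t vc) (fst p $ k, snd p $ k))"
    by (intro convex_on_sum_fun convex_positive_orthant_pair) auto
  then show "convex_on ?T (\<lambda>(t, vc). \<Sum>k\<in>UNIV. alpha k * Dhat beta (L k) (R k) (Vd k) (t $ k) (vc $ k))"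
    by (simp add: split_def)
qed

end
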